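(* Let $q$ be a prime power, $0<k<n$, and $X\in\mathcal{G}_q(n,k)$ with Ferrers diagram $\mathcal{F}_X$ and entries vector $x=(x_1,\dots,x_{|\mathcal{F}_X|})$ of its Ferrers tableaux form $\mathcal{F}(X)$. Then the number $\mathrm{Ind}_{\mathcal{F}}(X)$ of subspaces $Y\in\mathcal{G}_q(n,k)$ with $Y<X$ in the Ferrers-tableaux order is \[\mathrm{Ind}_{\mathcal{F}}(X)=\sum_{i=|\mathcal{F}_X|+1}^{k(n-k)}\alpha_iq^i+\mathrm{ind}_{|\mathcal{F}_X|}(\mathcal{F}_X)\,q^{|\mathcal{F}_X|}+\{x\},\] where $\alpha_i=p(k,n-k,i)$.
   Context: $\mathcal{G}_q(n,k)$ is the set of $k$-dimensional subspaces of $\mathbb{F}_q^n$; field elements are identified with $\mathbb{Z}_q=\{0,\dots,q-1\}$. For $X$, $\mathrm{RE}(X)$ is the unique $k\times n$ reduced row echelon matrix whose rows span $X$. The Ferrers tableaux form $\mathcal{F}(X)$ is obtained from $\mathrm{RE}(X)$ by deleting, in each row, the leading one and all entries to its left, and also deleting all columns containing a leading one; the remaining entries of each row are right-justified. The Ferrers diagram $\mathcal{F}_X$ is $\mathcal{F}(X)$ with entries replaced by dots; $|\mathcal{F}_X|$ is the number of dots. $\mathcal{F}_X$ is represented by $(\mathcal{F}_{n-k},\dots,\mathcal{F}_1)$, $\mathcal{F}_i$ the number of dots in the $i$-th column counted from the right. The entries vector $x=(x_1,\dots,x_{|\mathcal{F}_X|})$ lists the entries of $\mathcal{F}(X)$ numbered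 from right to left within a row and rows from top to bottom; $\{x\}=\sum_t x_tq^{|\mathcal{F}_X|-t}$. For diagrams of equal size, $\mathcal{F}<\widetilde{\mathcal{F}}$ if $\mathcal{F}_i>\widetilde{\mathcal{F}}_i$ at the least $i$ with $\mathcal{F}_i\ne\widetilde{\mathcal{F}}_i$; $\mathrm{ind}_m(\mathcal{F})$ is the number of Ferrers diagrams of size $m$ in a $k\times(n-k)$ box preceding $\mathcal{F}$. Order on $\mathcal{G}_q(n,k)$: $X<Y$ if $|\mathcal{F}_X|>|\mathcal{F}_Y|$; or $|\mathcal{F}_X|=|\mathcal{F}_Y|$ and $\mathcal{F}_X<\mathcal{F}_Y$; or $\mathcal{F}_X=\mathcal{F}_Y$ and $\{x\}<\{y\}$ ($y$ the entries vector of $\mathcal{F}(Y)$). $p(a,\eta,s)$ is the number of partitions of $s$ whose Ferrers diagram fits in an $a\times\eta$ box. *)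

theory Defs
  imports Main
begin

text \<open>Vectors of F_q^n are functions nat => 'a vanishing at indices >= n.
  A k x n matrix is a function nat => nat => 'a vanishing outside rows < k, columns < n.\<close>

definition is_mat :: "nat \<Rightarrow> nat \<Rightarrow> (nat \<Rightarrow> nat \<Rightarrow> 'a::zero) \<Rightarrow> bool" where
  "is_mat k n M \<longleftrightarrow> (\<forall>i j. (k \<le> i \<or> n \<le> j) \<longrightarrow> M i j = 0)"

definition rowspace :: "nat \<Rightarrow> (nat \<Rightarrow> nat \<Rightarrow> 'a::field) \<Rightarrow> (nat \<Rightarrow> 'a) set" where
  "rowspace k M = {v. \<exists>c. v = (\<lambda>j. \<Sum>i<k. c i * M i j)}"

definition rows_indep :: "nat \<Rightarrow> nat \<Rightarrow> (nat \<Rightarrow> nat \<Rightarrow> 'a::field) \<Rightarrow> bool" where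
  "rows_indep k n M \<longleftrightarrow>
     (\<forall>c. (\<forall>j<n. (\<Sum>i<k. c i * M i j) = 0) \<longrightarrow> (\<forall>i<k. c i = 0))"

definition Grass :: "nat \<Rightarrow> nat \<Rightarrow> (nat \<Rightarrow> 'a::field) set set" where
  "Grass n k = {rowspace k M | M. is_mat k n M \<and> rows_indep k n M}"

definition is_RREF :: "nat \<Rightarrow> nat \<Rightarrow> (nat \<Rightarrow> nat \<Rightarrow> 'a::field) \<Rightarrow> bool" where
  "is_RREF n k M \<longleftrightarrow> is_mat k n M \<and>
     (\<exists>piv. (\<forall>i<k. piv i < n \<and> M i (piv i) = 1 \<and> (\<forall>j<piv i. M i j = 0)
                  \<and> (\<forall>i'<k. i' \<noteq> i \<longrightarrow> M i' (piv i) = 0))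
          \<and> (\<forall>i i'. i < i' \<longrightarrow> i' < k \<longrightarrow> piv i < piv i'))"

definition RE :: "nat \<Rightarrow> nat \<Rightarrow> (nat \<Rightarrow> 'a::field) set \<Rightarrow> (nat \<Rightarrow> nat \<Rightarrow> 'a)" where
  "RE n k X = (THE M. is_RREF n k M \<and> rowspace k M = X)"

definition piv :: "nat \<Rightarrow> nat \<Rightarrow> (nat \<Rightarrow> 'a::field) set \<Rightarrow> nat \<Rightarrow> nat" where
  "piv n k X i = (LEAST j. RE n k X i j \<noteq> 0)"

definition nonpiv_cols :: "nat \<Rightarrow> nat \<Rightarrow> (nat \<Rightarrow> 'a::field) set \<Rightarrow> nat list" where
  "nonpiv_cols n k X = filter (\<lambda>j. j \<notin> piv n k X ` {..<k}) [0..<n]"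

text \<open>Ferrers diagram F_X as the function i |-> F_i (number of dots in the i-th column
  counted from the right), for 1 <= i <= n-k, and 0 elsewhere.\<close>
definition ferrers :: "nat \<Rightarrow> nat \<Rightarrow> (nat \<Rightarrow> 'a::field) set \<Rightarrow> nat \<Rightarrow> nat" where
  "ferrers n k X i = (if 1 \<le> i \<and> i \<le> n - k
      then card {r. r < k \<and> piv n k X r < nonpiv_cols n k X ! (n - k - i)} else 0)"

definition fsize :: "nat \<Rightarrow> nat \<Rightarrow> (nat \<Rightarrow> nat) \<Rightarrow> nat" where
  "fsize n k F = (\<Sum>i=1..n-k. F i)"

definition entries :: "nat \<Rightarrow> nat \<Rightarrow> (nat \<Rightarrow> 'a::field) set \<Rightarrow> 'a list" where
  "entries n k X = concat (map (\<lambda>i. map (\<lambda>j. RE n k X i j)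
      (rev (filter (\<lambda>j. piv n k X i < j) (nonpiv_cols n k X)))) [0..<k])"

text \<open>{x} = sum_t x_t q^(|F|-t), with field elements identified with {0..q-1} via enc.\<close>
definition entval :: "('a \<Rightarrow> nat) \<Rightarrow> nat \<Rightarrow> 'a list \<Rightarrow> nat" where
  "entval enc q xs = (\<Sum>t=1..length xs. enc (xs ! (t - 1)) * q ^ (length xs - t))"

definition fless :: "(nat \<Rightarrow> nat) \<Rightarrow> (nat \<Rightarrow> nat) \<Rightarrow> bool" where
  "fless F G \<longleftrightarrow> (\<exists>i. F i \<noteq> G i \<and> (\<forall>j<i. F j = G j) \<and> F i > G i)"

definition box_diagrams :: "nat \<Rightarrow> nat \<Rightarrow> nat \<Rightarrow> (nat \<Rightarrow> nat) set" where
  "box_diagrams n k m = {F. (\<forall>i. (i = 0 \<or> n - k < i) \<longrightarrow> F i = 0)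
      \<and> (\<forall>i j. 1 \<le> i \<longrightarrow> i \<le> j \<longrightarrow> j \<le> n - k \<longrightarrow> F j \<le> F i)
      \<and> (\<forall>i. F i \<le> k) \<and> fsize n k F = m}"

definition ind :: "nat \<Rightarrow> nat \<Rightarrow> nat \<Rightarrow> (nat \<Rightarrow> nat) \<Rightarrow> nat" where
  "ind n k m F = card {G \<in> box_diagrams n k m. fless G F}"

definition gless :: "('a \<Rightarrow> nat) \<Rightarrow> nat \<Rightarrow> nat \<Rightarrow> nat \<Rightarrow> (nat \<Rightarrow> 'a::field) set \<Rightarrow> (nat \<Rightarrow> 'a) set \<Rightarrow> bool" where
  "gless enc q n k X Y \<longleftrightarrow>
     (let FX = ferrers n k X; FY = ferrers n k Y in
       fsize n k FX > fsize n k FY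
     \<or> (fsize n k FX = fsize n k FY \<and> fless FX FY)
     \<or> (FX = FY \<and> entval enc q (entries n k X) < entval enc q (entries n k Y)))"

definition p_box :: "nat \<Rightarrow> nat \<Rightarrow> nat \<Rightarrow> nat" where
  "p_box a eta s = card {f :: nat \<Rightarrow> nat. (\<forall>i. a \<le> i \<longrightarrow> f i = 0)
      \<and> (\<forall>i j. i \<le> j \<longrightarrow> f j \<le> f i) \<and> (\<forall>i. f i \<le> eta) \<and> (\<Sum>i<a. f i) = s}"

end

theory Submission
  imports Defs
begin

text \<open>Every \<open>Y \<in> \<G>\<^sub>q(n,k)\<close> is the row space of exactly one reduced row echelon matrix, and such a
  matrix is determined by its pivot vector together with its entries vector; for a fixed pivot
  vector the entries range freely over all \<open>q\<^bsup>|\<F>|\<^esup>\<close> lists of length \<open>|\<F>|\<close>. Pivot vectors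
  correspond, through the row lengths \<open>n - k + r - P r\<close> of the tableau, to partitions in a
  \<open>k \<times> (n - k)\<close> box, and by conjugation to Ferrers diagrams in that box. The subspaces below \<open>X\<close>
  then fall into three classes: diagrams of larger size \<open>i\<close>, contributing \<open>p(k, n - k, i) q\<^sup>i\<close>;
  diagrams of the same size preceding \<open>\<F>\<^sub>X\<close>, contributing \<open>ind(\<F>\<^sub>X) q\<^bsup>|\<F>\<^sub>X|\<^esup>\<close>; and the diagram of
  \<open>X\<close> itself, where the order is that of the base-\<open>q\<close> values of the entries vectors, which
  enumerate \<open>{0, \<dots>, q\<^bsup>|\<F>\<^sub>X|\<^esup> - 1}\<close> bijectively, giving \<open>{x}\<close>.\<close>

section \<open>Row spaces\<close>

lemma mem_rowspace_iff: "v \<in> rowspace k M \<longleftrightarrow> (\<exists>c. v = (\<lambda>j. \<Sum>i<k. c i * M i j))"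
  by (simp add: rowspace_def)

lemma lincomb_rows_in_rowspace: "(\<lambda>j. \<Sum>i<k. c i * M i j) \<in> rowspace k M"
  unfolding mem_rowspace_iff by (rule exI[of _ c]) (rule refl)

lemma row_in_rowspace:
  fixes M :: "nat \<Rightarrow> nat \<Rightarrow> 'a::field"
  assumes "i < k"
  shows "M i \<in> rowspace k M"
  unfolding mem_rowspace_iff
  by (rule exI[of _ "\<lambda>l. if l = i then 1 else 0"])
    (use assms in \<open>simp add: if_distrib[of "\<lambda>c. c * _"] cong: if_cong\<close>)

lemma lincomb_in_rowspace:
  fixes M :: "nat \<Rightarrow> nat \<Rightarrow> 'a::field"
  assumes "finite L" and "\<And>l. l \<in> L \<Longrightarrow> w l \<in> rowspace k M"
  shows "(\<lambda>j. \<Sum>l\<in>L. a l * w l j) \<in> rowspace k M"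
proof -
  obtain d where d: "\<And>l. l \<in> L \<Longrightarrow> w l = (\<lambda>j. \<Sum>i<k. d l i * M i j)"
    using assms(2) unfolding mem_rowspace_iff by metis
  have "(\<Sum>l\<in>L. a l * w l j) = (\<Sum>i<k. (\<Sum>l\<in>L. a l * d l i) * M i j)" for j
  proof -
    have "(\<Sum>l\<in>L. a l * w l j) = (\<Sum>l\<in>L. \<Sum>i<k. a l * d l i * M i j)"
      by (rule sum.cong) (auto simp: d sum_distrib_left mult.assoc)
    also have "\<dots> = (\<Sum>i<k. (\<Sum>l\<in>L. a l * d l i) * M i j)"
      by (subst sum.swap) (simp add: sum_distrib_right)
    finally show ?thesis .
  qed
  then show ?thesis
    unfolding mem_rowspace_iff by (intro exI[of _ "\<lambda>i. \<Sum>l\<in>L. a l * d l i"] ext)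
qed

lemma lincomb2_in_rowspace:
  fixes M :: "nat \<Rightarrow> nat \<Rightarrow> 'a::field"
  assumes "u \<in> rowspace k M" and "v \<in> rowspace k M"
  shows "(\<lambda>j. a * u j + b * v j) \<in> rowspace k M"
  using lincomb_in_rowspace[of "{0::nat, 1}" "\<lambda>l. if l = 0 then u else v" k M
      "\<lambda>l. if l = 0 then a else b"] assms
  by simp

lemma rowspace_subsetI:
  fixes A B :: "nat \<Rightarrow> nat \<Rightarrow> 'a::field"
  assumes "\<And>i. i < k \<Longrightarrow> A i \<in> rowspace k' B"
  shows "rowspace k A \<subseteq> rowspace k' B"
  using lincomb_in_rowspace[of "{..<k}" A k' B] assms
  by (auto simp: mem_rowspace_iff)

lemma rows_indep_row_nonzero:
  fixes M :: "nat \<Rightarrow> nat \<Rightarrow> 'a::field"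
  assumes "rows_indep k n M" and "i < k"
  shows "\<exists>j<n. M i j \<noteq> 0"
proof (rule ccontr)
  assume "\<not> ?thesis"
  then have "\<forall>j<n. (\<Sum>l<k. (if l = i then 1 else 0) * M l j) = 0"
    using assms(2) by (simp add: if_distrib[of "\<lambda>c. c * _"] cong: if_cong)
  then have "(\<lambda>l. if l = i then (1::'a) else 0) i = 0"
    using assms(1)[unfolded rows_indep_def, THEN spec, of "\<lambda>l. if l = i then 1 else 0"] assms(2)
    by blast
  then show False
    by simp
qed

section \<open>Uniqueness of the reduced row echelon form\<close>

definition rref_pivots :: "nat \<Rightarrow> nat \<Rightarrow> (nat \<Rightarrow> nat \<Rightarrow> 'a::field) \<Rightarrow> (nat \<Rightarrow> nat) \<Rightarrow> bool" where
  "rref_pivots n k M p \<longleftrightarrow>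
     (\<forall>i<k. p i < n \<and> M i (p i) = 1 \<and> (\<forall>j<p i. M i j = 0) \<and> (\<forall>i'<k. i' \<noteq> i \<longrightarrow> M i' (p i) = 0))
     \<and> (\<forall>i i'. i < i' \<longrightarrow> i' < k \<longrightarrow> p i < p i')"

lemma is_RREF_iff: "is_RREF n k M \<longleftrightarrow> is_mat k n M \<and> (\<exists>p. rref_pivots n k M p)"
  unfolding is_RREF_def rref_pivots_def by blast

lemma rref_pivotsD:
  assumes "rref_pivots n k M p" and "i < k"
  shows "p i < n" and "M i (p i) = 1" and "\<And>j. j < p i \<Longrightarrow> M i j = 0"
    and "\<And>i'. i' < k \<Longrightarrow> i' \<noteq> i \<Longrightarrow> M i' (p i) = 0"
  using assms unfolding rref_pivots_def by auto

lemma rref_pivots_strict_mono: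
  "rref_pivots n k M p \<Longrightarrow> \<forall>i i'. i < i' \<longrightarrow> i' < k \<longrightarrow> p i < p i'"
  unfolding rref_pivots_def by blast

lemma rref_pivots_mono:
  assumes "rref_pivots n k M p" and "i \<le> i'" and "i' < k"
  shows "p i \<le> p i'"
  using assms unfolding rref_pivots_def by (cases "i = i'") (auto intro: less_imp_le)

lemma rref_pivots_cong:
  "(\<And>i. i < k \<Longrightarrow> p i = p' i) \<Longrightarrow> rref_pivots n k M p \<longleftrightarrow> rref_pivots n k M p'"
  unfolding rref_pivots_def by simp

lemma rref_lincomb_at_pivot:
  assumes "rref_pivots n k M p" and "l < k"
  shows "(\<Sum>i<k. c i * M i (p l)) = c l"
proof -
  have "(\<Sum>i<k. c i * M i (p l)) = (\<Sum>i<k. if i = l then c i else 0)"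
    by (rule sum.cong) (use assms in \<open>auto simp: rref_pivots_def\<close>)
  then show ?thesis
    using assms(2) by simp
qed

lemma rref_lincomb_leading:
  assumes "rref_pivots n k M p" and "i0 < k" and "c i0 \<noteq> 0" and "\<And>i. i < i0 \<Longrightarrow> c i = 0"
  shows "\<forall>j<p i0. (\<Sum>i<k. c i * M i j) = 0" and "(\<Sum>i<k. c i * M i (p i0)) \<noteq> 0"
proof (intro allI impI)
  fix j assume j: "j < p i0"
  have "c i * M i j = 0" if "i < k" for i
  proof (cases "i < i0")
    case False
    then have "p i0 \<le> p i"
      using rref_pivots_mono[OF assms(1)] that by simp
    then show ?thesis
      using j assms(1) that unfolding rref_pivots_def by auto
  qed (simp add: assms(4))
  then show "(\<Sum>i<k. c i * M i j) = 0"
    by (intro sum.neutral) simp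
next
  show "(\<Sum>i<k. c i * M i (p i0)) \<noteq> 0"
    using rref_lincomb_at_pivot[OF assms(1,2)] assms(3) by simp
qed

lemma rref_rows_indep:
  fixes M :: "nat \<Rightarrow> nat \<Rightarrow> 'a::field"
  assumes "rref_pivots n k M p"
  shows "rows_indep k n M"
  unfolding rows_indep_def
proof (intro allI impI)
  fix c i assume "\<forall>j<n. (\<Sum>i<k. c i * M i j) = 0" and "i < k"
  moreover have "p i < n"
    using assms \<open>i < k\<close> unfolding rref_pivots_def by blast
  ultimately show "c i = 0"
    using rref_lincomb_at_pivot[OF assms \<open>i < k\<close>] by auto
qed

lemma strict_mono_image_prefix_not_less:
  fixes p1 p2 :: "nat \<Rightarrow> nat"
  assumes "\<forall>i i'. i < i' \<longrightarrow> i' < k \<longrightarrow> p1 i < p1 i'"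
    and "\<forall>i i'. i < i' \<longrightarrow> i' < k \<longrightarrow> p2 i < p2 i'"
    and "p1 ` {..<k} \<subseteq> p2 ` {..<k}" and "i < k" and "\<forall>i'<i. p1 i' = p2 i'"
  shows "\<not> p1 i < p2 i"
proof
  assume lt: "p1 i < p2 i"
  obtain j where j: "j < k" "p1 i = p2 j"
    using assms(3,4) by auto
  show False
  proof (cases "j < i")
    case True
    then show False
      using assms(1,4,5) j by force
  next
    case False
    then have "p2 i \<le> p2 j"
      using assms(2) j(1) by (cases "i = j") (auto intro: less_imp_le)
    then show False
      using lt j by simp
  qed
qed

lemma strict_mono_image_eq:
  fixes p1 p2 :: "nat \<Rightarrow> nat"
  assumes "\<forall>i i'. i < i' \<longrightarrow> i' < k \<longrightarrow> p1 i < p1 i'"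
    and "\<forall>i i'. i < i' \<longrightarrow> i' < k \<longrightarrow> p2 i < p2 i'"
    and "p1 ` {..<k} = p2 ` {..<k}" and "i < k"
  shows "p1 i = p2 i"
  using assms(4)
proof (induction i rule: less_induct)
  case (less i)
  then have "\<not> p1 i < p2 i"
    by (intro strict_mono_image_prefix_not_less[OF assms(1,2)]) (use assms(3) in auto)
  moreover have "\<not> p2 i < p1 i"
    by (intro strict_mono_image_prefix_not_less[OF assms(2,1)]) (use assms(3) less in auto)
  ultimately show ?case
    by simp
qed

lemma rref_pivot_in_pivots:
  fixes A B :: "nat \<Rightarrow> nat \<Rightarrow> 'a::field"
  assumes rA: "rref_pivots n k A pa" and rB: "rref_pivots n k B pb"
    and sub: "rowspace k A \<subseteq> rowspace k B" and l: "l < k"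
  shows "pa l \<in> pb ` {..<k}"
proof -
  have "A l \<in> rowspace k B"
    using row_in_rowspace[OF l, of A] sub by blast
  then obtain c where c: "\<And>j. A l j = (\<Sum>i<k. c i * B i j)"
    unfolding mem_rowspace_iff by auto
  have Al: "A l (pa l) = 1" "\<And>j. j < pa l \<Longrightarrow> A l j = 0"
    using rA l unfolding rref_pivots_def by auto
  have "\<exists>i. i < k \<and> c i \<noteq> 0"
  proof (rule ccontr)
    assume "\<not> ?thesis"
    then show False
      using Al(1) c[of "pa l"] by simp
  qed
  define i0 where "i0 = (LEAST i. i < k \<and> c i \<noteq> 0)"
  have i0: "i0 < k" "c i0 \<noteq> 0"
    using LeastI_ex[OF \<open>\<exists>i. i < k \<and> c i \<noteq> 0\<close>] unfolding i0_def by auto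
  moreover have "c i = 0" if "i < i0" for i
    using not_less_Least[OF that[unfolded i0_def]] that i0(1) by simp
  ultimately have i0: "i0 < k" "c i0 \<noteq> 0" "\<And>i. i < i0 \<Longrightarrow> c i = 0"
    by blast+
  have "\<forall>j<pb i0. A l j = 0" "A l (pb i0) \<noteq> 0"
    using rref_lincomb_leading[where c = c, OF rB i0] unfolding c by auto
  then have "pa l = pb i0"
    using Al by (metis linorder_neqE_nat zero_neq_one)
  then show ?thesis
    using i0 by simp
qed

lemma rref_unique:
  fixes M1 M2 :: "nat \<Rightarrow> nat \<Rightarrow> 'a::field"
  assumes m1: "is_mat k n M1" and r1: "rref_pivots n k M1 p1"
    and m2: "is_mat k n M2" and r2: "rref_pivots n k M2 p2"
    and eq: "rowspace k M1 = rowspace k M2"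
  shows "M1 = M2"
proof (intro ext)
  fix i j
  have "p1 ` {..<k} = p2 ` {..<k}"
    using rref_pivot_in_pivots[OF r1 r2] rref_pivot_in_pivots[OF r2 r1] eq by blast
  then have p: "\<And>l. l < k \<Longrightarrow> p1 l = p2 l"
    by (rule strict_mono_image_eq[OF rref_pivots_strict_mono[OF r1] rref_pivots_strict_mono[OF r2]])
  show "M1 i j = M2 i j"
  proof (cases "i < k")
    case False
    then show ?thesis
      using m1 m2 unfolding is_mat_def by simp
  next
    case True
    have "M2 i \<in> rowspace k M1"
      using row_in_rowspace[OF True, of M2] eq by simp
    then obtain c where c: "\<And>j. M2 i j = (\<Sum>l<k. c l * M1 l j)"
      unfolding mem_rowspace_iff by auto
    have "c l = (if l = i then 1 else 0)" if "l < k" for l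
    proof -
      have "c l = M2 i (p2 l)"
        using c[of "p1 l"] rref_lincomb_at_pivot[where c = c, OF r1 that] p[OF that] by simp
      then show ?thesis
        using rref_pivotsD(2,4)[OF r2 that] True by auto
    qed
    then have "M2 i j = (\<Sum>l<k. if l = i then M1 l j else 0)"
      unfolding c by (intro sum.cong) auto
    then show ?thesis
      using True by simp
  qed
qed

section \<open>Existence by Gaussian elimination\<close>

definition skip_index :: "nat \<Rightarrow> nat \<Rightarrow> nat" where
  "skip_index i0 i = (if i < i0 then i else Suc i)"

lemma lessThan_Suc_skip_index:
  assumes "i0 < Suc k"
  shows "{..<Suc k} = insert i0 (skip_index i0 ` {..<k})"
    and "i0 \<notin> skip_index i0 ` {..<k}"
    and "inj_on (skip_index i0) {..<k}"
proof -
  show "{..<Suc k} = insert i0 (skip_index i0 ` {..<k})"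
  proof (intro set_eqI iffI)
    fix x assume "x \<in> {..<Suc k}"
    then have "x = i0 \<or> x = skip_index i0 (if x < i0 then x else x - 1)"
      by (auto simp: skip_index_def)
    then show "x \<in> insert i0 (skip_index i0 ` {..<k})"
      using \<open>x \<in> {..<Suc k}\<close> assms by (auto split: if_splits)
  qed (use assms in \<open>auto simp: skip_index_def\<close>)
qed (auto simp: skip_index_def inj_on_def)

lemma sum_lessThan_Suc_skip_index:
  "i0 < Suc k \<Longrightarrow> (\<Sum>i<Suc k. d i) = d i0 + (\<Sum>i<k. d (skip_index i0 i))"
  by (simp add: lessThan_Suc_skip_index sum.reindex)

lemma rows_indep_eliminate:
  fixes M N :: "nat \<Rightarrow> nat \<Rightarrow> 'a::field"
  assumes ind: "rows_indep (Suc k) n M" and i0: "i0 < Suc k"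
    and N: "\<And>i j. i < k \<Longrightarrow> N i j = M (skip_index i0 i) j - b i * M i0 j"
  shows "rows_indep k n N"
  unfolding rows_indep_def
proof (intro allI impI)
  fix c i assume h: "\<forall>j<n. (\<Sum>i<k. c i * N i j) = 0" and i: "i < k"
  define d where "d l = (if l = i0 then - (\<Sum>i<k. c i * b i) else if l < i0 then c l else c (l - 1))"
    for l
  have d_skip: "d (skip_index i0 i) = c i" for i
    unfolding d_def skip_index_def by auto
  have "(\<Sum>l<Suc k. d l * M l j) = (\<Sum>i<k. c i * N i j)" for j
  proof -
    have "(\<Sum>i<k. c i * N i j) = (\<Sum>i<k. c i * M (skip_index i0 i) j - c i * b i * M i0 j)"
      by (intro sum.cong) (simp_all add: N algebra_simps)
    also have "\<dots> = d i0 * M i0 j + (\<Sum>i<k. c i * M (skip_index i0 i) j)"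
      by (simp add: d_def sum_subtractf sum_distrib_right)
    also have "\<dots> = (\<Sum>l<Suc k. d l * M l j)"
      unfolding sum_lessThan_Suc_skip_index[OF i0] d_skip ..
    finally show ?thesis
      by simp
  qed
  then have "\<forall>l<Suc k. d l = 0"
    using ind h unfolding rows_indep_def by simp
  moreover have "skip_index i0 i < Suc k"
    using i by (simp add: skip_index_def)
  ultimately show "c i = 0"
    using d_skip[of i] by simp
qed

text \<open>Matrices are functions of the row index, so \<open>case_nat v N\<close> is \<open>N\<close> with the row \<open>v\<close> put on top.\<close>
lemma rowspace_subset_eliminate:
  fixes M N :: "nat \<Rightarrow> nat \<Rightarrow> 'a::field"
  assumes i0: "i0 < Suc k" and a: "a \<noteq> 0"
    and N: "\<And>i j. i < k \<Longrightarrow> N i j = M (skip_index i0 i) j - b i * M i0 j"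
  shows "rowspace (Suc k) M \<subseteq> rowspace (Suc k) (case_nat (\<lambda>j. M i0 j / a) N)"
proof (rule rowspace_subsetI)
  let ?v = "\<lambda>j. M i0 j / a"
  have v: "?v \<in> rowspace (Suc k) (case_nat ?v N)"
    using row_in_rowspace[of 0 "Suc k" "case_nat ?v N"] by simp
  fix l assume l: "l < Suc k"
  show "M l \<in> rowspace (Suc k) (case_nat ?v N)"
  proof (cases "l = i0")
    case True
    have "(\<lambda>j. a * ?v j + 0 * ?v j) \<in> rowspace (Suc k) (case_nat ?v N)"
      by (rule lincomb2_in_rowspace[OF v v])
    then show ?thesis
      using a True by simp
  next
    case False
    then obtain i where i: "i < k" "l = skip_index i0 i"
      using l lessThan_Suc_skip_index(1)[OF i0] by auto
    have "N i \<in> rowspace (Suc k) (case_nat ?v N)"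
      using row_in_rowspace[of "Suc i" "Suc k" "case_nat ?v N"] i by simp
    then have "(\<lambda>j. 1 * N i j + (b i * a) * ?v j) \<in> rowspace (Suc k) (case_nat ?v N)"
      by (rule lincomb2_in_rowspace[OF _ v])
    then show ?thesis
      using a i N by simp
  qed
qed

lemma eliminate_subset_rowspace:
  fixes M N :: "nat \<Rightarrow> nat \<Rightarrow> 'a::field"
  assumes i0: "i0 < Suc k" and a: "a \<noteq> 0"
    and N: "\<And>i j. i < k \<Longrightarrow> N i j = M (skip_index i0 i) j - b i * M i0 j"
  shows "rowspace (Suc k) (case_nat (\<lambda>j. M i0 j / a) N) \<subseteq> rowspace (Suc k) M"
proof (rule rowspace_subsetI)
  have M0: "M i0 \<in> rowspace (Suc k) M"
    by (rule row_in_rowspace[OF i0])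
  fix l assume l: "l < Suc k"
  show "case_nat (\<lambda>j. M i0 j / a) N l \<in> rowspace (Suc k) M"
  proof (cases l)
    case 0
    have "(\<lambda>j. (1 / a) * M i0 j + 0 * M i0 j) \<in> rowspace (Suc k) M"
      by (rule lincomb2_in_rowspace[OF M0 M0])
    then show ?thesis
      using 0 by simp
  next
    case (Suc i)
    have "skip_index i0 i < Suc k"
      using l Suc by (simp add: skip_index_def)
    then have "(\<lambda>j. 1 * M (skip_index i0 i) j + (- b i) * M i0 j) \<in> rowspace (Suc k) M"
      by (intro lincomb2_in_rowspace[OF _ M0] row_in_rowspace)
    moreover have "N i = (\<lambda>j. 1 * M (skip_index i0 i) j + (- b i) * M i0 j)"
      using l Suc N by auto
    ultimately show ?thesis
      using Suc by simp
  qed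
qed

lemma rowspace_case_nat:
  fixes N :: "nat \<Rightarrow> nat \<Rightarrow> 'a::field"
  shows "rowspace (Suc k) (case_nat v N) = {(\<lambda>j. a * v j + w j) | a w. w \<in> rowspace k N}"
proof (intro set_eqI iffI)
  have sum: "(\<Sum>i<Suc k. c i * case_nat v N i j) = c 0 * v j + (\<Sum>i<k. c (Suc i) * N i j)" for c j
    unfolding sum.lessThan_Suc_shift by simp
  fix u
  assume "u \<in> rowspace (Suc k) (case_nat v N)"
  then obtain c where c: "u = (\<lambda>j. c 0 * v j + (\<Sum>i<k. c (Suc i) * N i j))"
    unfolding mem_rowspace_iff sum by blast
  have "(\<lambda>j. \<Sum>i<k. c (Suc i) * N i j) \<in> rowspace k N"
    by (rule lincomb_rows_in_rowspace)
  then show "u \<in> {(\<lambda>j. a * v j + w j) | a w. w \<in> rowspace k N}"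
    unfolding c by (intro CollectI exI[of _ "c 0"] exI conjI) simp_all
next
  fix u
  assume "u \<in> {(\<lambda>j. a * v j + w j) | a w. w \<in> rowspace k N}"
  then obtain a d where u: "u = (\<lambda>j. a * v j + (\<Sum>i<k. d i * N i j))"
    unfolding mem_rowspace_iff by blast
  have "u = (\<lambda>j. \<Sum>i<Suc k. case_nat a d i * case_nat v N i j)"
    unfolding u sum.lessThan_Suc_shift by simp
  then show "u \<in> rowspace (Suc k) (case_nat v N)"
    unfolding mem_rowspace_iff by blast
qed

lemma rowspace_case_nat_cong:
  fixes N N' :: "nat \<Rightarrow> nat \<Rightarrow> 'a::field"
  shows "rowspace k N = rowspace k N' \<Longrightarrow> rowspace (Suc k) (case_nat v N) = rowspace (Suc k) (case_nat v N')"
  by (simp add: rowspace_case_nat)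

lemma rowspace_case_nat_diff:
  fixes N :: "nat \<Rightarrow> nat \<Rightarrow> 'a::field"
  assumes w: "w \<in> rowspace k N"
  shows "rowspace (Suc k) (case_nat (\<lambda>j. v j - w j) N) = rowspace (Suc k) (case_nat v N)"
proof -
  have shift: "{(\<lambda>j. a * v' j + u j) | a u. u \<in> rowspace k N}
      \<subseteq> {(\<lambda>j. a * (v' j + c * w j) + u j) | a u. u \<in> rowspace k N}" for v' c
  proof
    fix x assume "x \<in> {(\<lambda>j. a * v' j + u j) | a u. u \<in> rowspace k N}"
    then obtain a u where x: "x = (\<lambda>j. a * v' j + u j)" and u: "u \<in> rowspace k N"
      by blast
    have "(\<lambda>j. 1 * u j + (- a * c) * w j) \<in> rowspace k N"
      by (rule lincomb2_in_rowspace[OF u w])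
    moreover have "x = (\<lambda>j. a * (v' j + c * w j) + (1 * u j + (- a * c) * w j))"
      unfolding x by (simp add: algebra_simps)
    ultimately show "x \<in> {(\<lambda>j. a * (v' j + c * w j) + u j) | a u. u \<in> rowspace k N}"
      by (intro CollectI exI conjI)
  qed
  show ?thesis
    unfolding rowspace_case_nat using shift[of "\<lambda>j. v j - w j" 1] shift[of v "- 1"]
    by (intro equalityI) simp_all
qed

lemma pivot_elimination:
  fixes M :: "nat \<Rightarrow> nat \<Rightarrow> 'a::field"
  assumes mat: "is_mat (Suc k) n M" and ind: "rows_indep (Suc k) n M"
  obtains q v N where "q < n" "v q = 1" "\<And>j. j < q \<Longrightarrow> v j = 0" "\<And>j. n \<le> j \<Longrightarrow> v j = 0"
    "is_mat k n N" "rows_indep k n N" "\<And>i j. j \<le> q \<Longrightarrow> N i j = 0"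
    "rowspace (Suc k) M = rowspace (Suc k) (case_nat v N)"
proof -
  have ex: "\<exists>j. \<exists>i<Suc k. M i j \<noteq> 0"
    using rows_indep_row_nonzero[OF ind, of 0] by auto
  define q where "q = (LEAST j. \<exists>i<Suc k. M i j \<noteq> 0)"
  obtain i0 where i0: "i0 < Suc k" "M i0 q \<noteq> 0"
    using LeastI_ex[OF ex] unfolding q_def by blast
  have below: "M i j = 0" if "j < q" for i j
    using not_less_Least[OF that[unfolded q_def]] mat unfolding is_mat_def by (cases "i < Suc k") auto
  define a where "a = M i0 q"
  define N where "N i j = (if i < k then M (skip_index i0 i) j - M (skip_index i0 i) q / a * M i0 j else 0)"
    for i j
  have a: "a \<noteq> 0"
    using i0 by (simp add: a_def)
  have N_eq: "N i j = M (skip_index i0 i) j - M (skip_index i0 i) q / a * M i0 j" if "i < k" for i j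
    using that by (simp add: N_def)
  show thesis
  proof (rule that)
    show "q < n"
      using i0 mat unfolding is_mat_def by (meson not_le)
    show "(\<lambda>j. M i0 j / a) q = 1"
      using a by (simp add: a_def)
    show "(\<lambda>j. M i0 j / a) j = 0" if "j < q" for j
      using below[OF that] by simp
    show "(\<lambda>j. M i0 j / a) j = 0" if "n \<le> j" for j
      using mat that unfolding is_mat_def by simp
    show "is_mat k n N"
      using mat unfolding is_mat_def N_def by auto
    show "rows_indep k n N"
      by (rule rows_indep_eliminate[OF ind i0(1) N_eq])
    show "N i j = 0" if "j \<le> q" for i j
      using that a below unfolding N_def a_def by (cases "j = q") auto
    show "rowspace (Suc k) M = rowspace (Suc k) (case_nat (\<lambda>j. M i0 j / a) N)"
      using rowspace_subset_eliminate[OF i0(1) a N_eq] eliminate_subset_rowspace[OF i0(1) a N_eq]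
      by (rule equalityI)
  qed
qed

text \<open>Back substitution: the new first row is cleared in the pivot columns of \<open>N\<close>.\<close>
lemma rref_case_nat:
  fixes N :: "nat \<Rightarrow> nat \<Rightarrow> 'a::field"
  assumes mat: "is_mat k n N" and r: "rref_pivots n k N p"
    and q: "q < n" "v q = 1" "\<And>j. j < q \<Longrightarrow> v j = 0" "\<And>j. n \<le> j \<Longrightarrow> v j = 0"
    and zero: "\<And>i j. j \<le> q \<Longrightarrow> N i j = 0"
  defines "v' \<equiv> \<lambda>j. v j - (\<Sum>i<k. v (p i) * N i j)"
  shows "is_mat (Suc k) n (case_nat v' N)" and "rref_pivots n (Suc k) (case_nat v' N) (case_nat q p)"
proof -
  have v'_q: "v' q = 1" and v'_below: "\<And>j. j < q \<Longrightarrow> v' j = 0"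
    using q zero by (simp_all add: v'_def)
  have v'_piv: "v' (p l) = 0" if "l < k" for l
    unfolding v'_def using rref_lincomb_at_pivot[OF r that] by simp
  have q_p: "q < p i" if "i < k" for i
    using rref_pivotsD(2)[OF r that] zero[of "p i" i] by (metis not_le one_neq_zero)
  show "is_mat (Suc k) n (case_nat v' N)"
    using mat q(4) unfolding is_mat_def v'_def by (auto split: nat.split)
  have piv: "case_nat q p i < n \<and> case_nat v' N i (case_nat q p i) = 1
      \<and> (\<forall>j<case_nat q p i. case_nat v' N i j = 0)
      \<and> (\<forall>i'<Suc k. i' \<noteq> i \<longrightarrow> case_nat v' N i' (case_nat q p i) = 0)" if "i < Suc k" for i
  proof (cases i)
    case 0
    then show ?thesis
      using q v'_q v'_below zero by (auto split: nat.split)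
  next
    case (Suc l)
    then have l: "l < k"
      using that by simp
    show ?thesis
      using rref_pivotsD[OF r l] v'_piv[OF l] Suc by (auto split: nat.split)
  qed
  have mono: "case_nat q p i < case_nat q p i'" if "i < i'" "i' < Suc k" for i i'
    using that q_p rref_pivots_strict_mono[OF r] by (cases i; cases i') auto
  show "rref_pivots n (Suc k) (case_nat v' N) (case_nat q p)"
    unfolding rref_pivots_def using piv mono by blast
qed

lemma rref_exists:
  fixes M :: "nat \<Rightarrow> nat \<Rightarrow> 'a::field"
  assumes "is_mat k n M" and "rows_indep k n M"
  shows "\<exists>M'. is_RREF n k M' \<and> rowspace k M' = rowspace k M"
  using assms
proof (induction k arbitrary: M)
  case 0
  then show ?case
    by (auto simp: is_RREF_iff rref_pivots_def)
next
  case (Suc k M)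
  obtain q v N where q: "q < n" "v q = 1" "\<And>j. j < q \<Longrightarrow> v j = 0" "\<And>j. n \<le> j \<Longrightarrow> v j = 0"
    and N: "is_mat k n N" "rows_indep k n N" "\<And>i j. j \<le> q \<Longrightarrow> N i j = 0"
    and M_eq: "rowspace (Suc k) M = rowspace (Suc k) (case_nat v N)"
    using pivot_elimination[OF Suc.prems] by blast
  obtain N' p where N': "is_mat k n N'" "rref_pivots n k N' p" and N'_eq: "rowspace k N' = rowspace k N"
    using Suc.IH[OF N(1,2)] unfolding is_RREF_iff by blast
  have N'_zero: "N' i j = 0" if "j \<le> q" for i j
  proof (cases "i < k")
    case True
    then have "N' i \<in> rowspace k N"
      using row_in_rowspace[of i k N'] N'_eq by simp
    then show ?thesis
      using N(3)[OF that] unfolding mem_rowspace_iff by auto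
  qed (use N'(1) in \<open>simp add: is_mat_def\<close>)
  define w where "w j = (\<Sum>i<k. v (p i) * N' i j)" for j
  have rref: "is_RREF n (Suc k) (case_nat (\<lambda>j. v j - w j) N')"
    using rref_case_nat[where v = v, OF N' q N'_zero] unfolding is_RREF_iff w_def by blast
  have "w \<in> rowspace k N'"
    unfolding w_def by (rule lincomb_rows_in_rowspace)
  then have "rowspace (Suc k) (case_nat (\<lambda>j. v j - w j) N') = rowspace (Suc k) (case_nat v N')"
    by (rule rowspace_case_nat_diff)
  also have "\<dots> = rowspace (Suc k) M"
    unfolding M_eq by (rule rowspace_case_nat_cong[OF N'_eq])
  finally show ?case
    using rref by blast
qed

lemma RE_rowspace:
  fixes M :: "nat \<Rightarrow> nat \<Rightarrow> 'a::field"
  assumes "is_RREF n k M"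
  shows "RE n k (rowspace k M) = M"
  unfolding RE_def
proof (rule the_equality)
  fix M' assume "is_RREF n k M' \<and> rowspace k M' = rowspace k M"
  then show "M' = M"
    using assms rref_unique unfolding is_RREF_iff by blast
qed (use assms in simp)

lemma bij_betw_rowspace_Grass:
  "bij_betw (rowspace k) {M :: nat \<Rightarrow> nat \<Rightarrow> 'a::field. is_RREF n k M} (Grass n k)"
proof (rule bij_betw_imageI)
  show "inj_on (rowspace k) {M :: nat \<Rightarrow> nat \<Rightarrow> 'a. is_RREF n k M}"
    by (rule inj_onI) (metis RE_rowspace mem_Collect_eq)
  show "rowspace k ` {M :: nat \<Rightarrow> nat \<Rightarrow> 'a. is_RREF n k M} = Grass n k"
  proof (intro equalityI subsetI)
    fix X :: "(nat \<Rightarrow> 'a) set"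
    assume "X \<in> rowspace k ` {M. is_RREF n k M}"
    then obtain M p where "X = rowspace k M" "is_mat k n M" "rref_pivots n k M p"
      unfolding is_RREF_iff by blast
    then show "X \<in> Grass n k"
      unfolding Grass_def using rref_rows_indep by blast
  next
    fix X :: "(nat \<Rightarrow> 'a) set"
    assume "X \<in> Grass n k"
    then obtain M where X: "X = rowspace k M" and "is_mat k n M" "rows_indep k n M"
      unfolding Grass_def by blast
    then obtain M' where "is_RREF n k M'" "rowspace k M' = rowspace k M"
      using rref_exists by blast
    then show "X \<in> rowspace k ` {M. is_RREF n k M}"
      unfolding X by (metis image_eqI mem_Collect_eq)
  qed
qed

section \<open>Pivot vectors\<close>

definition pivots_of :: "(nat \<Rightarrow> nat \<Rightarrow> 'a::zero) \<Rightarrow> nat \<Rightarrow> nat" where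
  "pivots_of M i = (LEAST j. M i j \<noteq> 0)"

text \<open>Rows \<open>i \<ge> k\<close> of a \<open>k \<times> n\<close> matrix vanish, and there \<^const>\<open>pivots_of\<close> returns the junk
  value \<open>LEAST j. False\<close>; pinning pivot vectors to that value makes \<^term>\<open>pivots_of M\<close> one.\<close>
definition pivot_vectors :: "nat \<Rightarrow> nat \<Rightarrow> (nat \<Rightarrow> nat) set" where
  "pivot_vectors n k = {P. (\<forall>i<k. P i < n) \<and> (\<forall>i i'. i < i' \<longrightarrow> i' < k \<longrightarrow> P i < P i')
     \<and> (\<forall>i. k \<le> i \<longrightarrow> P i = (LEAST j::nat. False))}"

lemma pivots_of_rref:
  fixes M :: "nat \<Rightarrow> nat \<Rightarrow> 'a::field"
  assumes "is_mat k n M" and "rref_pivots n k M p"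
  shows "pivots_of M i = (if i < k then p i else (LEAST j::nat. False))"
proof (cases "i < k")
  case True
  have "pivots_of M i = p i"
    unfolding pivots_of_def
    by (rule Least_equality) (use rref_pivotsD[OF assms(2) True] in \<open>auto simp: not_le[symmetric]\<close>)
  then show ?thesis
    using True by simp
next
  case False
  then show ?thesis
    using assms(1) unfolding pivots_of_def is_mat_def by simp
qed

lemma is_RREF_pivots_of:
  fixes M :: "nat \<Rightarrow> nat \<Rightarrow> 'a::field"
  assumes "is_RREF n k M"
  shows "pivots_of M \<in> pivot_vectors n k" and "rref_pivots n k M (pivots_of M)"
proof -
  obtain p where m: "is_mat k n M" and r: "rref_pivots n k M p"
    using assms unfolding is_RREF_iff by blast
  show "rref_pivots n k M (pivots_of M)"
    using r by (subst rref_pivots_cong[of k _ p]) (simp_all add: pivots_of_rref[OF m r])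
  show "pivots_of M \<in> pivot_vectors n k"
    using r unfolding pivot_vectors_def rref_pivots_def by (simp add: pivots_of_rref[OF m r])
qed

lemma piv_eq_pivots_of_RE: "piv n k X = pivots_of (RE n k X)"
  unfolding piv_def pivots_of_def ..

lemma pivot_vectorsD:
  assumes "P \<in> pivot_vectors n k"
  shows "\<And>i. i < k \<Longrightarrow> P i < n" and "\<And>i i'. i < i' \<Longrightarrow> i' < k \<Longrightarrow> P i < P i'"
    and "\<And>i. k \<le> i \<Longrightarrow> P i = (LEAST j::nat. False)"
  using assms unfolding pivot_vectors_def by blast+

lemma pivot_vectors_inj_on:
  assumes "P \<in> pivot_vectors n k"
  shows "inj_on P {..<k}"
proof (rule inj_onI)
  fix i i' assume "i \<in> {..<k}" "i' \<in> {..<k}" "P i = P i'"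
  then show "i = i'"
    using pivot_vectorsD(2)[OF assms, of i i'] pivot_vectorsD(2)[OF assms, of i' i]
    by (cases i i' rule: linorder_cases) auto
qed

lemma pivot_vectors_gap: "P \<in> pivot_vectors n k \<Longrightarrow> r + d < k \<Longrightarrow> P r + d \<le> P (r + d)"
proof (induction d)
  case (Suc d)
  then show ?case
    using pivot_vectorsD(2)[OF Suc.prems(1), of "r + d" "r + Suc d"] by simp
qed simp

lemma pivot_vectors_bounds:
  assumes P: "P \<in> pivot_vectors n k" and r: "r < k"
  shows "r \<le> P r" and "P r + k \<le> n + r"
proof -
  show "r \<le> P r"
    using pivot_vectors_gap[OF P, of 0 r] r by simp
  have "P r + (k - 1 - r) \<le> P (r + (k - 1 - r))"
    using pivot_vectors_gap[OF P, of r "k - 1 - r"] r by simp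
  moreover have "P (r + (k - 1 - r)) < n"
    using pivot_vectorsD(1)[OF P] r by simp
  ultimately show "P r + k \<le> n + r"
    using r by simp
qed

lemma finite_pivot_vectors: "finite (pivot_vectors n k)"
proof (rule finite_subset)
  show "pivot_vectors n k \<subseteq> {P. \<forall>i. (i \<in> {..<k} \<longrightarrow> P i \<in> {..<n})
      \<and> (i \<notin> {..<k} \<longrightarrow> P i = (LEAST j::nat. False))}"
    unfolding pivot_vectors_def by auto
qed (rule finite_set_of_finite_funs; simp)

definition free_cols :: "nat \<Rightarrow> nat \<Rightarrow> (nat \<Rightarrow> nat) \<Rightarrow> nat list" where
  "free_cols n k P = filter (\<lambda>j. j \<notin> P ` {..<k}) [0..<n]"

definition ferrers_of :: "nat \<Rightarrow> nat \<Rightarrow> (nat \<Rightarrow> nat) \<Rightarrow> nat \<Rightarrow> nat" where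
  "ferrers_of n k P i = (if 1 \<le> i \<and> i \<le> n - k
     then card {r. r < k \<and> P r < free_cols n k P ! (n - k - i)} else 0)"

definition free_positions :: "nat \<Rightarrow> nat \<Rightarrow> (nat \<Rightarrow> nat) \<Rightarrow> (nat \<times> nat) list" where
  "free_positions n k P =
     concat (map (\<lambda>i. map (Pair i) (rev (filter (\<lambda>j. P i < j) (free_cols n k P)))) [0..<k])"

definition row_length :: "nat \<Rightarrow> nat \<Rightarrow> (nat \<Rightarrow> nat) \<Rightarrow> nat \<Rightarrow> nat" where
  "row_length n k P r = (if r < k then length (filter (\<lambda>j. P r < j) (free_cols n k P)) else 0)"

lemma ferrers_eq_ferrers_of: "ferrers n k X = ferrers_of n k (piv n k X)"
  unfolding ferrers_def ferrers_of_def free_cols_def nonpiv_cols_def ..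

lemma free_positions_distinct: "distinct (free_positions n k P)"
proof -
  have "distinct (concat (map (\<lambda>i. map (Pair i) (h i)) xs))" if "distinct xs" "\<And>i. distinct (h i)"
    for xs :: "nat list" and h :: "nat \<Rightarrow> nat list"
    using that by (induction xs) (auto simp: distinct_map inj_on_def)
  then show ?thesis
    unfolding free_positions_def by (simp add: free_cols_def)
qed

lemma set_free_positions:
  "set (free_positions n k P) = {(i, j). i < k \<and> j < n \<and> P i < j \<and> j \<notin> P ` {..<k}}"
  unfolding free_positions_def free_cols_def by auto

lemma set_free_cols: "set (free_cols n k P) = {j. j < n \<and> j \<notin> P ` {..<k}}"
  unfolding free_cols_def by auto

lemma sorted_free_cols: "sorted_wrt (<) (free_cols n k P)"
  unfolding free_cols_def by (rule sorted_wrt_filter) (simp add: sorted_wrt_upt)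

lemma distinct_free_cols: "distinct (free_cols n k P)"
  unfolding free_cols_def by simp

lemma length_free_cols:
  assumes P: "P \<in> pivot_vectors n k"
  shows "length (free_cols n k P) = n - k"
proof -
  have "length (free_cols n k P) = card ({..<n} - P ` {..<k})"
    unfolding free_cols_def
    by (subst distinct_length_filter) (simp_all add: Diff_eq Int_commute lessThan_atLeast0 Collect_neg_eq)
  also have "\<dots> = card {..<n} - card (P ` {..<k})"
    by (rule card_Diff_subset) (use pivot_vectorsD(1)[OF P] in auto)
  also have "card (P ` {..<k}) = k"
    using card_image[OF pivot_vectors_inj_on[OF P]] by simp
  finally show ?thesis
    by simp
qed

lemma free_cols_greater:
  assumes P: "P \<in> pivot_vectors n k" and r: "r < k"
  shows "{j. P r < j} \<inter> set (free_cols n k P) = {P r<..<n} - P ` {r<..<k}"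
proof -
  have not_pivot: "j \<notin> P ` {..<k}" if "P r < j" "j \<notin> P ` {r<..<k}" for j
  proof
    assume "j \<in> P ` {..<k}"
    then obtain i where i: "i < k" "j = P i"
      by auto
    then have "\<not> r < i"
      using that by auto
    then have "P i \<le> P r"
      using pivot_vectorsD(2)[OF P, of i r] r by (cases "i = r") auto
    then show False
      using that i by simp
  qed
  show ?thesis
  proof (intro set_eqI iffI)
    fix j assume "j \<in> {j. P r < j} \<inter> set (free_cols n k P)"
    then show "j \<in> {P r<..<n} - P ` {r<..<k}"
      unfolding set_free_cols by auto
  next
    fix j assume "j \<in> {P r<..<n} - P ` {r<..<k}"
    then show "j \<in> {j. P r < j} \<inter> set (free_cols n k P)"
      using not_pivot[of j] unfolding set_free_cols by auto
  qed
qed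

text \<open>Row \<open>r\<close> of the Ferrers tableau keeps the \<open>n - P r - 1\<close> columns right of its leading one,
  minus the \<open>k - r - 1\<close> pivot columns of the rows below.\<close>
lemma row_length_eq:
  assumes P: "P \<in> pivot_vectors n k" and r: "r < k"
  shows "row_length n k P r = n - k + r - P r"
proof -
  have inj: "inj_on P {r<..<k}"
    by (rule inj_on_subset[OF pivot_vectors_inj_on[OF P]]) auto
  have "row_length n k P r = card ({j. P r < j} \<inter> set (free_cols n k P))"
    unfolding row_length_def using r by (simp add: distinct_length_filter[OF distinct_free_cols])
  also have "\<dots> = card {P r<..<n} - card (P ` {r<..<k})"
    unfolding free_cols_greater[OF P r]
    by (rule card_Diff_subset) (use pivot_vectorsD(1,2)[OF P] in auto)
  also have "card (P ` {r<..<k}) = k - Suc r"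
    using inj by (simp add: card_image)
  finally show ?thesis
    using pivot_vectors_bounds[OF P r] pivot_vectorsD(1)[OF P r] r by simp
qed

lemma row_length_le:
  assumes P: "P \<in> pivot_vectors n k"
  shows "row_length n k P r \<le> n - k"
proof (cases "r < k")
  case True
  then show ?thesis
    using row_length_eq[OF P True] pivot_vectors_bounds(1)[OF P True] by simp
qed (simp add: row_length_def)

lemma row_length_antimono:
  assumes P: "P \<in> pivot_vectors n k" and "a \<le> b"
  shows "row_length n k P b \<le> row_length n k P a"
proof (cases "b < k")
  case True
  have "P a + (b - a) \<le> P b"
    using pivot_vectors_gap[OF P, of a "b - a"] assms(2) True by simp
  then show ?thesis
    using row_length_eq[OF P] pivot_vectors_bounds[OF P, of a] pivot_vectors_bounds[OF P, of b]
      assms(2) True by simp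
qed (simp add: row_length_def)

lemma length_free_positions: "length (free_positions n k P) = (\<Sum>r<k. row_length n k P r)"
proof -
  have "length (free_positions n k P)
      = (\<Sum>i\<in>{0..<k}. length (filter (\<lambda>j. P i < j) (free_cols n k P)))"
    unfolding free_positions_def
    by (simp add: length_concat comp_def interv_sum_list_conv_sum_set_nat)
  also have "\<dots> = (\<Sum>r<k. row_length n k P r)"
    by (rule sum.cong) (auto simp: row_length_def)
  finally show ?thesis .
qed

lemma length_free_positions_le:
  assumes "P \<in> pivot_vectors n k"
  shows "length (free_positions n k P) \<le> k * (n - k)"
  unfolding length_free_positions
  using sum_mono[of "{..<k}" "row_length n k P" "\<lambda>_. n - k"] row_length_le[OF assms] by simp

definition partitions_in_box :: "nat \<Rightarrow> nat \<Rightarrow> nat \<Rightarrow> (nat \<Rightarrow> nat) set" where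
  "partitions_in_box a eta s = {f. (\<forall>i. a \<le> i \<longrightarrow> f i = 0) \<and> (\<forall>i j. i \<le> j \<longrightarrow> f j \<le> f i)
     \<and> (\<forall>i. f i \<le> eta) \<and> (\<Sum>i<a. f i) = s}"

lemma p_box_eq_card: "p_box a eta s = card (partitions_in_box a eta s)"
  unfolding p_box_def partitions_in_box_def ..

lemma row_length_in_partitions_in_box:
  assumes P: "P \<in> pivot_vectors n k"
  shows "row_length n k P \<in> partitions_in_box k (n - k) (length (free_positions n k P))"
  unfolding partitions_in_box_def
  using row_length_antimono[OF P] row_length_le[OF P] length_free_positions
  by (auto simp: row_length_def)

lemma row_length_inj:
  assumes P1: "P1 \<in> pivot_vectors n k" and P2: "P2 \<in> pivot_vectors n k"
    and eq: "row_length n k P1 = row_length n k P2"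
  shows "P1 = P2"
proof
  fix r
  show "P1 r = P2 r"
  proof (cases "r < k")
    case True
    then have "n - k + r - P1 r = n - k + r - P2 r"
      using eq row_length_eq[OF P1 True] row_length_eq[OF P2 True] by metis
    then show ?thesis
      using pivot_vectors_bounds(2)[OF P1 True] pivot_vectors_bounds(2)[OF P2 True] by simp
  next
    case False
    then show ?thesis
      using pivot_vectorsD(3)[OF P1] pivot_vectorsD(3)[OF P2] by simp
  qed
qed

lemma row_length_surj:
  assumes f: "f \<in> partitions_in_box k (n - k) s" and kn: "k \<le> n"
  obtains P where "P \<in> pivot_vectors n k" and "row_length n k P = f"
proof -
  have f0: "\<And>i. k \<le> i \<Longrightarrow> f i = 0" and fa: "\<And>i j. i \<le> j \<Longrightarrow> f j \<le> f i"
    and fb: "\<And>i. f i \<le> n - k"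
    using f unfolding partitions_in_box_def by auto
  define P where "P r = (if r < k then n - k + r - f r else (LEAST j::nat. False))" for r
  have P: "P \<in> pivot_vectors n k"
    unfolding pivot_vectors_def
  proof (intro CollectI conjI allI impI)
    fix i i' :: nat assume "i < i'" "i' < k"
    then show "P i < P i'"
      using fa[of i i'] fb[of i] unfolding P_def by simp
  qed (use kn in \<open>auto simp: P_def\<close>)
  moreover have "row_length n k P = f"
  proof
    fix r
    show "row_length n k P r = f r"
      using row_length_eq[OF P, of r] fb[of r] f0[of r] by (cases "r < k") (auto simp: P_def row_length_def)
  qed
  ultimately show thesis
    by (rule that)
qed

lemma bij_betw_row_length:
  assumes "k \<le> n"
  shows "bij_betw (row_length n k) {P \<in> pivot_vectors n k. length (free_positions n k P) = s}
    (partitions_in_box k (n - k) s)"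
proof (rule bij_betw_imageI)
  show "inj_on (row_length n k) {P \<in> pivot_vectors n k. length (free_positions n k P) = s}"
    using row_length_inj by (auto intro: inj_onI)
  show "row_length n k ` {P \<in> pivot_vectors n k. length (free_positions n k P) = s}
      = partitions_in_box k (n - k) s"
  proof (intro equalityI subsetI)
    fix f assume "f \<in> partitions_in_box k (n - k) s"
    moreover obtain P where "P \<in> pivot_vectors n k" "row_length n k P = f"
      using row_length_surj[OF calculation assms] .
    ultimately show "f \<in> row_length n k ` {P \<in> pivot_vectors n k. length (free_positions n k P) = s}"
      using length_free_positions[of n k P] unfolding partitions_in_box_def by auto
  qed (use row_length_in_partitions_in_box in auto)
qed

section \<open>Conjugate partitions\<close>

lemma down_closed_eq_lessThan_card:
  fixes S :: "nat set"
  assumes "finite S" and "\<And>x y. x \<in> S \<Longrightarrow> y < x \<Longrightarrow> y \<in> S"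
  shows "S = {..<card S}"
proof (cases "S = {}")
  case False
  have "S = {..Max S}"
    using Max_ge[OF assms(1)] Max_in[OF assms(1) False] assms(2) by (auto simp: le_less)
  then show ?thesis
    by (metis card_atMost lessThan_Suc_atMost)
qed simp

lemma down_closed_eq_atLeastAtMost_card:
  fixes S :: "nat set"
  assumes "finite S" and "0 \<notin> S" and "\<And>x y. x \<in> S \<Longrightarrow> 1 \<le> y \<Longrightarrow> y < x \<Longrightarrow> y \<in> S"
  shows "S = {1..card S}"
proof (cases "S = {}")
  case False
  have "S = {1..Max S}"
  proof (intro equalityI subsetI)
    fix x assume "x \<in> S"
    then show "x \<in> {1..Max S}"
      using Max_ge[OF assms(1)] assms(2) by (cases x) auto
  next
    fix x assume "x \<in> {1..Max S}"
    then show "x \<in> S"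
      using Max_in[OF assms(1) False] assms(3) by (cases "x = Max S") auto
  qed
  then show ?thesis
    by (metis card_atLeastAtMost diff_Suc_1)
qed simp

lemma antimono_le_iff_less_card:
  fixes f :: "nat \<Rightarrow> nat"
  assumes "\<And>a b. a \<le> b \<Longrightarrow> b < k \<Longrightarrow> f b \<le> f a" and "r < k"
  shows "i \<le> f r \<longleftrightarrow> r < card {r'. r' < k \<and> i \<le> f r'}"
proof -
  have "{r'. r' < k \<and> i \<le> f r'} = {..<card {r'. r' < k \<and> i \<le> f r'}}"
    by (rule down_closed_eq_lessThan_card) (use assms(1) in \<open>auto intro: le_trans\<close>)
  then show ?thesis
    using assms(2) by blast
qed

lemma antimono_less_iff_le_card:
  fixes G :: "nat \<Rightarrow> nat"
  assumes "\<And>a b. 1 \<le> a \<Longrightarrow> a \<le> b \<Longrightarrow> b \<le> N \<Longrightarrow> G b \<le> G a" and "1 \<le> i" "i \<le> N"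
  shows "r < G i \<longleftrightarrow> i \<le> card {i'. 1 \<le> i' \<and> i' \<le> N \<and> r < G i'}"
proof -
  have "{i'. 1 \<le> i' \<and> i' \<le> N \<and> r < G i'} = {1..card {i'. 1 \<le> i' \<and> i' \<le> N \<and> r < G i'}}"
    by (rule down_closed_eq_atLeastAtMost_card) (use assms(1) in \<open>auto intro: less_le_trans\<close>)
  then have "i \<in> {i'. 1 \<le> i' \<and> i' \<le> N \<and> r < G i'}
      \<longleftrightarrow> i \<in> {1..card {i'. 1 \<le> i' \<and> i' \<le> N \<and> r < G i'}}"
    by simp
  then show ?thesis
    using assms(2,3) by simp
qed

lemma sum_card_le_eq_sum:
  fixes f :: "nat \<Rightarrow> nat"
  assumes "\<And>r. r < k \<Longrightarrow> f r \<le> N"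
  shows "(\<Sum>i=1..N. card {r. r < k \<and> i \<le> f r}) = (\<Sum>r<k. f r)"
proof -
  have "(\<Sum>i=1..N. card {r. r < k \<and> i \<le> f r}) = (\<Sum>i=1..N. \<Sum>r<k. if i \<le> f r then 1 else 0)"
    by (intro sum.cong refl) (simp add: sum.If_cases Int_def conj_commute)
  also have "\<dots> = (\<Sum>r<k. \<Sum>i=1..N. if i \<le> f r then 1 else 0)"
    by (rule sum.swap)
  also have "\<dots> = (\<Sum>r<k. f r)"
  proof (intro sum.cong refl)
    fix r assume "r \<in> {..<k}"
    then have "{1..N} \<inter> {i. i \<le> f r} = {1..f r}"
      using assms[of r] by auto
    then show "(\<Sum>i=1..N. if i \<le> f r then 1 else 0) = f r"
      by (simp add: sum.If_cases)
  qed
  finally show ?thesis .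
qed

text \<open>The rows of a Ferrers diagram are right-justified, so its \<open>i\<close>-th column from the right
  meets exactly the rows of length at least \<open>i\<close>.\<close>
definition cols_of_rows :: "nat \<Rightarrow> nat \<Rightarrow> (nat \<Rightarrow> nat) \<Rightarrow> nat \<Rightarrow> nat" where
  "cols_of_rows n k f i = (if 1 \<le> i \<and> i \<le> n - k then card {r. r < k \<and> i \<le> f r} else 0)"

definition rows_of_cols :: "nat \<Rightarrow> nat \<Rightarrow> (nat \<Rightarrow> nat) \<Rightarrow> nat \<Rightarrow> nat" where
  "rows_of_cols n k G r = card {i. 1 \<le> i \<and> i \<le> n - k \<and> r < G i}"

lemma cols_of_rows_le: "cols_of_rows n k f i \<le> k"
  unfolding cols_of_rows_def using card_mono[of "{..<k}" "{r. r < k \<and> i \<le> f r}"] by auto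

lemma cols_of_rows_in_box_diagrams:
  assumes f: "f \<in> partitions_in_box k (n - k) s"
  shows "cols_of_rows n k f \<in> box_diagrams n k s"
proof -
  have fb: "\<And>i. f i \<le> n - k" and fs: "(\<Sum>i<k. f i) = s"
    using f unfolding partitions_in_box_def by auto
  have "cols_of_rows n k f j \<le> cols_of_rows n k f i" if "1 \<le> i" "i \<le> j" "j \<le> n - k" for i j
  proof -
    have "card {r. r < k \<and> j \<le> f r} \<le> card {r. r < k \<and> i \<le> f r}"
      by (rule card_mono) (use that in auto)
    then show ?thesis
      unfolding cols_of_rows_def using that by simp
  qed
  moreover have "fsize n k (cols_of_rows n k f) = s"
    unfolding fsize_def cols_of_rows_def using sum_card_le_eq_sum[of k f "n - k"] fb fs by simp
  moreover have "cols_of_rows n k f i = 0" if "i = 0 \<or> n - k < i" for i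
    using that by (auto simp: cols_of_rows_def)
  ultimately show ?thesis
    unfolding box_diagrams_def using cols_of_rows_le by blast
qed

lemma rows_of_cols_cols_of_rows:
  assumes f: "f \<in> partitions_in_box k (n - k) s"
  shows "rows_of_cols n k (cols_of_rows n k f) = f"
proof
  fix r
  have f0: "\<And>i. k \<le> i \<Longrightarrow> f i = 0" and fa: "\<And>i j. i \<le> j \<Longrightarrow> f j \<le> f i"
    and fb: "\<And>i. f i \<le> n - k"
    using f unfolding partitions_in_box_def by auto
  show "rows_of_cols n k (cols_of_rows n k f) r = f r"
  proof (cases "r < k")
    case True
    have "r < cols_of_rows n k f i \<longleftrightarrow> i \<le> f r" if "1 \<le> i" "i \<le> n - k" for i
      using antimono_le_iff_less_card[of k f, OF fa True, of i] that by (simp add: cols_of_rows_def)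
    then have "{i. 1 \<le> i \<and> i \<le> n - k \<and> r < cols_of_rows n k f i} = {1..f r}"
      using fb[of r] by auto
    then show ?thesis
      unfolding rows_of_cols_def by simp
  next
    case False
    then have "\<not> r < cols_of_rows n k f i" for i
      using cols_of_rows_le[of n k f i] by simp
    then show ?thesis
      using f0 False unfolding rows_of_cols_def by simp
  qed
qed

lemma cols_of_rows_rows_of_cols:
  assumes G: "G \<in> box_diagrams n k s"
  shows "cols_of_rows n k (rows_of_cols n k G) = G"
proof -
  have G0: "\<And>i. i = 0 \<or> n - k < i \<Longrightarrow> G i = 0"
    and Ga: "\<And>i j. 1 \<le> i \<Longrightarrow> i \<le> j \<Longrightarrow> j \<le> n - k \<Longrightarrow> G j \<le> G i"
    and Gk: "\<And>i. G i \<le> k"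
    using G unfolding box_diagrams_def by auto
  show ?thesis
  proof
    fix i
    show "cols_of_rows n k (rows_of_cols n k G) i = G i"
    proof (cases "1 \<le> i \<and> i \<le> n - k")
      case True
      then have iff: "i \<le> rows_of_cols n k G r \<longleftrightarrow> r < G i" for r
        using antimono_less_iff_le_card[of "n - k" G, OF Ga, of i r] unfolding rows_of_cols_def by simp
      have "{r. r < k \<and> i \<le> rows_of_cols n k G r} = {..<G i}"
      proof (intro set_eqI)
        fix r
        show "r \<in> {r. r < k \<and> i \<le> rows_of_cols n k G r} \<longleftrightarrow> r \<in> {..<G i}"
          using iff[of r] Gk[of i] by auto
      qed
      then show ?thesis
        unfolding cols_of_rows_def using True by simp
    next
      case False
      then have "G i = 0"
        by (intro G0) auto
      then show ?thesis
        unfolding cols_of_rows_def if_not_P[OF False] by simp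
    qed
  qed
qed

lemma rows_of_cols_in_partitions_in_box:
  assumes G: "G \<in> box_diagrams n k s"
  shows "rows_of_cols n k G \<in> partitions_in_box k (n - k) s"
proof -
  have Gk: "\<And>i. G i \<le> k" and Gs: "fsize n k G = s"
    using G unfolding box_diagrams_def by auto
  have bound: "rows_of_cols n k G r \<le> n - k" for r
  proof -
    have "card {i. 1 \<le> i \<and> i \<le> n - k \<and> r < G i} \<le> card {1..n - k}"
      by (rule card_mono) auto
    then show ?thesis
      unfolding rows_of_cols_def by simp
  qed
  have "(\<Sum>r<k. rows_of_cols n k G r) = fsize n k (cols_of_rows n k (rows_of_cols n k G))"
    unfolding fsize_def cols_of_rows_def using sum_card_le_eq_sum[of k "rows_of_cols n k G" "n - k"] bound
    by simp
  then have "(\<Sum>r<k. rows_of_cols n k G r) = s"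
    using cols_of_rows_rows_of_cols[OF G] Gs by simp
  moreover have "rows_of_cols n k G j \<le> rows_of_cols n k G i" if "i \<le> j" for i j
    unfolding rows_of_cols_def by (rule card_mono) (use that in \<open>auto intro: less_le_trans\<close>)
  moreover have "rows_of_cols n k G i = 0" if "k \<le> i" for i
  proof -
    have "\<not> i < G i'" for i'
      using Gk[of i'] that by simp
    then show ?thesis
      unfolding rows_of_cols_def by simp
  qed
  ultimately show ?thesis
    unfolding partitions_in_box_def using bound by blast
qed

lemma bij_betw_cols_of_rows:
  "bij_betw (cols_of_rows n k) (partitions_in_box k (n - k) s) (box_diagrams n k s)"
proof (rule bij_betw_byWitness[where f' = "rows_of_cols n k"])
  show "\<forall>f\<in>partitions_in_box k (n - k) s. rows_of_cols n k (cols_of_rows n k f) = f"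
    using rows_of_cols_cols_of_rows by blast
  show "\<forall>G\<in>box_diagrams n k s. cols_of_rows n k (rows_of_cols n k G) = G"
    using cols_of_rows_rows_of_cols by blast
  show "cols_of_rows n k ` partitions_in_box k (n - k) s \<subseteq> box_diagrams n k s"
    using cols_of_rows_in_box_diagrams by blast
  show "rows_of_cols n k ` box_diagrams n k s \<subseteq> partitions_in_box k (n - k) s"
    using rows_of_cols_in_partitions_in_box by blast
qed

lemma sorted_less_nth_from_end_iff:
  fixes xs :: "nat list"
  assumes "sorted_wrt (<) xs" and "1 \<le> i" and "i \<le> length xs"
  shows "a < xs ! (length xs - i) \<longleftrightarrow> i \<le> length (filter (\<lambda>j. a < j) xs)"
  using assms
proof (induction xs arbitrary: i)
  case (Cons x ys)
  show ?case
  proof (cases "a < x")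
    case True
    then have all: "\<forall>y\<in>set (x # ys). a < y"
      using Cons.prems(1) by auto
    moreover have "(x # ys) ! (length (x # ys) - i) \<in> set (x # ys)"
      using Cons.prems(2) by (intro nth_mem) simp
    ultimately have "a < (x # ys) ! (length (x # ys) - i)"
      by blast
    moreover have "filter (\<lambda>j. a < j) (x # ys) = x # ys"
      using all by (simp only: filter_id_conv)
    ultimately show ?thesis
      using Cons.prems(3) by simp
  next
    case False
    show ?thesis
    proof (cases "i \<le> length ys")
      case True
      then have "(x # ys) ! (length (x # ys) - i) = ys ! (length ys - i)"
        using Cons.prems(2) by (simp add: Suc_diff_le)
      then show ?thesis
        using Cons.IH[of i] Cons.prems True False by simp
    next
      case False
      then have "i = Suc (length ys)"
        using Cons.prems(3) by simp
      moreover have "length (filter (\<lambda>j. a < j) ys) < Suc (length ys)"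
        by (simp add: le_imp_less_Suc)
      ultimately show ?thesis
        using \<open>\<not> a < x\<close> by simp
    qed
  qed
qed simp

lemma ferrers_of_eq_cols_of_rows:
  assumes P: "P \<in> pivot_vectors n k"
  shows "ferrers_of n k P = cols_of_rows n k (row_length n k P)"
proof
  fix i
  show "ferrers_of n k P i = cols_of_rows n k (row_length n k P) i"
  proof (cases "1 \<le> i \<and> i \<le> n - k")
    case True
    have "P r < free_cols n k P ! (n - k - i) \<longleftrightarrow> i \<le> row_length n k P r" if "r < k" for r
      using sorted_less_nth_from_end_iff[OF sorted_free_cols[of n k P], of i "P r"] True that
      unfolding length_free_cols[OF P] row_length_def by simp
    then have "{r. r < k \<and> P r < free_cols n k P ! (n - k - i)} = {r. r < k \<and> i \<le> row_length n k P r}"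
      by blast
    then show ?thesis
      unfolding ferrers_of_def cols_of_rows_def using True by simp
  next
    case False
    show ?thesis
      unfolding ferrers_of_def cols_of_rows_def if_not_P[OF False] ..
  qed
qed

lemma bij_betw_ferrers_of:
  assumes "k \<le> n"
  shows "bij_betw (ferrers_of n k) {P \<in> pivot_vectors n k. length (free_positions n k P) = s}
    (box_diagrams n k s)"
proof -
  have "bij_betw (cols_of_rows n k \<circ> row_length n k)
      {P \<in> pivot_vectors n k. length (free_positions n k P) = s} (box_diagrams n k s)"
    by (rule bij_betw_trans[OF bij_betw_row_length[OF assms] bij_betw_cols_of_rows])
  then show ?thesis
    by (rule bij_betw_cong[THEN iffD1, rotated]) (simp add: ferrers_of_eq_cols_of_rows)
qed

lemma fsize_ferrers_of:
  assumes "P \<in> pivot_vectors n k"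
  shows "fsize n k (ferrers_of n k P) = length (free_positions n k P)"
  using cols_of_rows_in_box_diagrams[OF row_length_in_partitions_in_box[OF assms]]
  unfolding ferrers_of_eq_cols_of_rows[OF assms] box_diagrams_def by simp

lemma ferrers_of_inj:
  assumes P1: "P1 \<in> pivot_vectors n k" and P2: "P2 \<in> pivot_vectors n k"
    and eq: "ferrers_of n k P1 = ferrers_of n k P2"
  shows "P1 = P2"
proof -
  have "row_length n k P1 = rows_of_cols n k (ferrers_of n k P1)"
    using rows_of_cols_cols_of_rows[OF row_length_in_partitions_in_box[OF P1]]
    by (simp add: ferrers_of_eq_cols_of_rows[OF P1])
  also have "\<dots> = row_length n k P2"
    using rows_of_cols_cols_of_rows[OF row_length_in_partitions_in_box[OF P2]]
    by (simp add: eq ferrers_of_eq_cols_of_rows[OF P2])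
  finally show ?thesis
    by (rule row_length_inj[OF P1 P2])
qed

section \<open>Counting subspaces by pivot vector\<close>

definition rref_entries :: "nat \<Rightarrow> nat \<Rightarrow> (nat \<Rightarrow> nat \<Rightarrow> 'a::zero) \<Rightarrow> 'a list" where
  "rref_entries n k M = map (\<lambda>(i, j). M i j) (free_positions n k (pivots_of M))"

lemma entries_eq_rref_entries_RE: "entries n k X = rref_entries n k (RE n k X)"
  unfolding entries_def rref_entries_def free_positions_def free_cols_def nonpiv_cols_def
    piv_eq_pivots_of_RE
  by (simp add: map_concat comp_def)

lemma rref_entries_inj:
  fixes M1 M2 :: "nat \<Rightarrow> nat \<Rightarrow> 'a::field"
  assumes M1: "is_RREF n k M1" and M2: "is_RREF n k M2"
    and piv: "pivots_of M1 = pivots_of M2" and eq: "rref_entries n k M1 = rref_entries n k M2"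
  shows "M1 = M2"
proof (intro ext)
  fix i j
  define P where "P = pivots_of M1"
  have r1: "rref_pivots n k M1 P" and r2: "rref_pivots n k M2 P"
    using is_RREF_pivots_of(2)[OF M1] is_RREF_pivots_of(2)[OF M2] piv by (simp_all add: P_def)
  have m1: "is_mat k n M1" and m2: "is_mat k n M2"
    using M1 M2 unfolding is_RREF_iff by auto
  have "map (\<lambda>(i, j). M1 i j) (free_positions n k P) = map (\<lambda>(i, j). M2 i j) (free_positions n k P)"
    using eq piv unfolding rref_entries_def P_def by simp
  then have free: "M1 i j = M2 i j" if "(i, j) \<in> set (free_positions n k P)"
    using that unfolding map_eq_conv by (auto dest!: bspec[where x = "(i, j)"])
  show "M1 i j = M2 i j"
  proof (cases "i < k \<and> j < n")
    case False
    then show ?thesis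
      using m1 m2 unfolding is_mat_def by auto
  next
    case True
    consider "j = P i" | "j \<in> P ` {..<k}" "j \<noteq> P i" | "j < P i" | "(i, j) \<in> set (free_positions n k P)"
      using True unfolding set_free_positions by fastforce
    then show ?thesis
    proof cases
      case 2
      then obtain i' where "i' < k" "j = P i'" "i' \<noteq> i"
        by auto
      then show ?thesis
        using rref_pivotsD(4)[OF r1] rref_pivotsD(4)[OF r2] True by simp
    qed (use rref_pivotsD[OF r1] rref_pivotsD[OF r2] True free in auto)
  qed
qed

lemma rref_entries_surj:
  fixes xs :: "'a::field list"
  assumes P: "P \<in> pivot_vectors n k" and len: "length xs = length (free_positions n k P)"
  obtains M where "is_RREF n k M" and "pivots_of M = P" and "rref_entries n k M = xs"
proof -
  let ?L = "free_positions n k P"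
  define M where "M i j = (case map_of (zip ?L xs) (i, j) of
      Some x \<Rightarrow> x | None \<Rightarrow> if i < k \<and> j = P i then 1 else 0)" for i j
  have M_out: "M i j = (if i < k \<and> j = P i then 1 else 0)" if "(i, j) \<notin> set ?L" for i j
  proof -
    have "map_of (zip ?L xs) (i, j) = None"
      using that len by simp
    then show ?thesis
      unfolding M_def by simp
  qed
  have mat: "is_mat k n M"
    unfolding is_mat_def using M_out pivot_vectorsD(1)[OF P] set_free_positions by fastforce
  have r: "rref_pivots n k M P"
    unfolding rref_pivots_def
    using pivot_vectorsD(1,2)[OF P] inj_onD[OF pivot_vectors_inj_on[OF P]] M_out
    by (auto simp: set_free_positions)
  have piv: "pivots_of M = P"
    using pivots_of_rref[OF mat r] pivot_vectorsD(3)[OF P] by (auto simp: not_less)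
  have "map (\<lambda>(i, j). M i j) ?L = xs"
  proof (rule nth_equalityI)
    fix t assume "t < length (map (\<lambda>(i, j). M i j) ?L)"
    then have t: "t < length xs"
      using len by simp
    have "map_of (zip ?L xs) (?L ! t) = Some (xs ! t)"
      by (rule map_of_zip_nth[OF len[symmetric] free_positions_distinct t])
    then show "map (\<lambda>(i, j). M i j) ?L ! t = xs ! t"
      using t len unfolding M_def by (simp add: case_prod_beta)
  qed (use len in simp)
  then show thesis
    using that mat r piv unfolding is_RREF_iff rref_entries_def by blast
qed

lemma bij_betw_pivots_rref_entries:
  "bij_betw (\<lambda>M. (pivots_of M, rref_entries n k M)) {M :: nat \<Rightarrow> nat \<Rightarrow> 'a::field. is_RREF n k M}
     (SIGMA P:pivot_vectors n k. {xs. length xs = length (free_positions n k P)})"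
proof (rule bij_betw_imageI)
  show "inj_on (\<lambda>M. (pivots_of M, rref_entries n k M)) {M :: nat \<Rightarrow> nat \<Rightarrow> 'a. is_RREF n k M}"
    by (rule inj_onI) (use rref_entries_inj in auto)
  show "(\<lambda>M. (pivots_of M, rref_entries n k M)) ` {M :: nat \<Rightarrow> nat \<Rightarrow> 'a. is_RREF n k M}
      = (SIGMA P:pivot_vectors n k. {xs. length xs = length (free_positions n k P)})"
  proof (intro equalityI subsetI)
    fix Pxs :: "(nat \<Rightarrow> nat) \<times> 'a list"
    assume "Pxs \<in> (SIGMA P:pivot_vectors n k. {xs. length xs = length (free_positions n k P)})"
    then obtain P xs where "Pxs = (P, xs)" "P \<in> pivot_vectors n k" "length xs = length (free_positions n k P)"
      by blast
    then show "Pxs \<in> (\<lambda>M. (pivots_of M, rref_entries n k M)) ` {M. is_RREF n k M}"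
      using rref_entries_surj by (metis (mono_tags, lifting) image_eqI mem_Collect_eq)
  qed (auto simp: is_RREF_pivots_of(1) rref_entries_def)
qed

lemma card_filter_bij_betw:
  "bij_betw f A B \<Longrightarrow> card {a \<in> A. Q (f a)} = card {b \<in> B. Q b}"
  by (rule bij_betw_same_card, rule bij_betw_subset) (auto simp: bij_betw_def)

lemma card_Grass_by_pivots:
  fixes R :: "(nat \<Rightarrow> nat) \<Rightarrow> 'a::{field,finite} list \<Rightarrow> bool"
  shows "card {Y \<in> Grass n k. R (piv n k Y) (entries n k Y)}
    = (\<Sum>P\<in>pivot_vectors n k. card {xs :: 'a list. length xs = length (free_positions n k P) \<and> R P xs})"
proof -
  let ?Q = "\<lambda>Y :: (nat \<Rightarrow> 'a) set. R (piv n k Y) (entries n k Y)"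
  have "card {Y \<in> Grass n k. ?Q Y} = card {M \<in> {M. is_RREF n k M}. ?Q (rowspace k M)}"
    by (rule card_filter_bij_betw[OF bij_betw_rowspace_Grass, symmetric])
  also have "{M \<in> {M. is_RREF n k M}. ?Q (rowspace k M)}
      = {M \<in> {M. is_RREF n k M}. case_prod R (pivots_of M, rref_entries n k M)}"
    by (auto simp: piv_eq_pivots_of_RE entries_eq_rref_entries_RE RE_rowspace)
  also have "card \<dots> = card {Pxs \<in> (SIGMA P:pivot_vectors n k. {xs :: 'a list. length xs = length (free_positions n k P)}).
      case_prod R Pxs}"
    by (rule card_filter_bij_betw[OF bij_betw_pivots_rref_entries])
  also have "\<dots> = card (SIGMA P:pivot_vectors n k. {xs. length xs = length (free_positions n k P) \<and> R P xs})"
    by (rule arg_cong[where f = card]) auto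
  also have "\<dots> = (\<Sum>P\<in>pivot_vectors n k. card {xs :: 'a list. length xs = length (free_positions n k P) \<and> R P xs})"
    by (rule card_SigmaI) (auto intro: finite_pivot_vectors finite_subset[OF _ finite_lists_length_eq])
  finally show ?thesis .
qed

lemma Grass_piv_entries:
  fixes X :: "(nat \<Rightarrow> 'a::field) set"
  assumes "X \<in> Grass n k"
  shows "piv n k X \<in> pivot_vectors n k"
    and "length (entries n k X) = length (free_positions n k (piv n k X))"
proof -
  obtain M :: "nat \<Rightarrow> nat \<Rightarrow> 'a" where M: "is_RREF n k M" and X: "X = rowspace k M"
    using assms bij_betw_rowspace_Grass[of k n] unfolding bij_betw_def by auto
  then show "piv n k X \<in> pivot_vectors n k"
    and "length (entries n k X) = length (free_positions n k (piv n k X))"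
    using is_RREF_pivots_of(1)[OF M]
    by (simp_all add: piv_eq_pivots_of_RE entries_eq_rref_entries_RE RE_rowspace rref_entries_def)
qed

section \<open>Base-q values of entries vectors\<close>

lemma entval_Cons: "entval enc q (x # xs) = enc x * q ^ length xs + entval enc q xs"
proof -
  have "entval enc q (x # xs)
      = enc x * q ^ length xs + (\<Sum>t=Suc 1..Suc (length xs). enc ((x # xs) ! (t - 1)) * q ^ (Suc (length xs) - t))"
    unfolding entval_def by (subst sum.atLeast_Suc_atMost) simp_all
  also have "(\<Sum>t=Suc 1..Suc (length xs). enc ((x # xs) ! (t - 1)) * q ^ (Suc (length xs) - t))
      = entval enc q xs"
    unfolding entval_def sum.shift_bounds_cl_Suc_ivl by (intro sum.cong refl) (auto simp: nth_Cons')
  finally show ?thesis .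
qed

lemma entval_less:
  assumes "\<And>x. enc x < q"
  shows "entval enc q xs < q ^ length xs"
proof (induction xs)
  case Nil
  then show ?case
    by (simp add: entval_def)
next
  case (Cons x xs)
  have "entval enc q (x # xs) < (enc x + 1) * q ^ length xs"
    using Cons.IH by (simp add: entval_Cons)
  also have "\<dots> \<le> q * q ^ length xs"
    using assms[of x] by (intro mult_right_mono) auto
  finally show ?case
    by simp
qed

lemma entval_inj:
  assumes "inj enc" and "\<And>x. enc x < q"
  shows "length xs = length ys \<Longrightarrow> entval enc q xs = entval enc q ys \<Longrightarrow> xs = ys"
proof (induction xs ys rule: list_induct2)
  case (Cons x xs y ys)
  let ?Q = "q ^ length xs"
  have less: "entval enc q xs < ?Q" "entval enc q ys < ?Q"
    using entval_less[of enc q, OF assms(2), of xs] entval_less[of enc q, OF assms(2), of ys] Cons.hyps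
    by simp_all
  have eq: "entval enc q xs + enc x * ?Q = entval enc q ys + enc y * ?Q"
    using Cons.prems Cons.hyps by (simp add: entval_Cons add.commute)
  then have "enc x = enc y"
    using less by (metis add.commute div_mult_self1 div_less add_0 less_zeroE)
  then show ?case
    using eq Cons.IH assms(1) by (simp add: inj_eq)
qed simp

lemma card_entval_less:
  fixes enc :: "'a::finite \<Rightarrow> nat"
  assumes bij: "bij_betw enc UNIV {..<card (UNIV :: 'a set)}" and e: "e \<le> card (UNIV :: 'a set) ^ L"
  shows "card {xs :: 'a list. length xs = L \<and> entval enc (card (UNIV :: 'a set)) xs < e} = e"
proof -
  let ?q = "card (UNIV :: 'a set)" and ?A = "{xs :: 'a list. length xs = L}"
  have lt: "\<And>x. enc x < ?q"
    using bij unfolding bij_betw_def by auto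
  have inj: "inj_on (entval enc ?q) ?A"
    using entval_inj[of enc ?q, OF bij_betw_imp_inj_on[OF bij] lt] by (auto intro: inj_onI)
  have "entval enc ?q ` ?A = {..<?q ^ L}"
    by (rule card_subset_eq)
      (use entval_less[of enc ?q, OF lt] card_image[OF inj] card_lists_length_eq[of "UNIV :: 'a set" L]
        in auto)
  then have "bij_betw (entval enc ?q) ?A {..<?q ^ L}"
    using inj by (simp add: bij_betw_def)
  then have "card {xs \<in> ?A. entval enc ?q xs < e} = card {v \<in> {..<?q ^ L}. v < e}"
    by (rule card_filter_bij_betw)
  also have "{v \<in> {..<?q ^ L}. v < e} = {..<e}"
    using e by auto
  finally show ?thesis
    by simp
qed

lemma card_lists_length_cases:
  fixes enc :: "'a::finite \<Rightarrow> nat"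
  assumes bij: "bij_betw enc UNIV {..<card (UNIV :: 'a set)}"
    and e: "C \<Longrightarrow> e \<le> card (UNIV :: 'a set) ^ L"
  shows "card {xs :: 'a list. length xs = L \<and> (D \<or> C \<and> entval enc (card (UNIV :: 'a set)) xs < e)}
    = (if D then card (UNIV :: 'a set) ^ L else if C then e else 0)"
  using card_lists_length_eq[of "UNIV :: 'a set" L] card_entval_less[OF bij e] by auto

section \<open>The index of a subspace\<close>

lemma card_lists_gless_fiber:
  fixes enc :: "'a::finite \<Rightarrow> nat"
  assumes bij: "bij_betw enc UNIV {..<card (UNIV :: 'a set)}"
    and P: "P \<in> pivot_vectors n k" and PX: "PX \<in> pivot_vectors n k"
    and e: "e < card (UNIV :: 'a set) ^ length (free_positions n k PX)"
  defines "q \<equiv> card (UNIV :: 'a set)" and "L \<equiv> \<lambda>P. length (free_positions n k P)"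
  shows "card {xs :: 'a list. length xs = L P \<and> (L PX < L P
        \<or> L P = L PX \<and> fless (ferrers_of n k P) (ferrers_of n k PX)
        \<or> ferrers_of n k P = ferrers_of n k PX \<and> entval enc q xs < e)}
    = (if L PX < L P then q ^ L P else 0)
      + (if L P = L PX \<and> fless (ferrers_of n k P) (ferrers_of n k PX) then q ^ L PX else 0)
      + (if P = PX then e else 0)"
proof -
  have C: "ferrers_of n k P = ferrers_of n k PX \<longleftrightarrow> P = PX"
    using ferrers_of_inj[OF P PX] by auto
  have "\<not> fless F F" for F
    unfolding fless_def by simp
  moreover have "card {xs :: 'a list. length xs = L P \<and> (L PX < L P
        \<or> L P = L PX \<and> fless (ferrers_of n k P) (ferrers_of n k PX) \<or> P = PX \<and> entval enc q xs < e)}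
      = (if L PX < L P \<or> L P = L PX \<and> fless (ferrers_of n k P) (ferrers_of n k PX) then q ^ L P
         else if P = PX then e else 0)"
    unfolding q_def disj_assoc[symmetric]
    by (rule card_lists_length_cases[OF bij]) (use e in \<open>simp add: L_def\<close>)
  ultimately show ?thesis
    unfolding C by auto
qed

lemma sum_pivot_vectors_longer:
  assumes "k \<le> n"
  shows "(\<Sum>P\<in>pivot_vectors n k. if m < length (free_positions n k P) then q ^ length (free_positions n k P) else 0)
    = (\<Sum>i\<in>{m+1..k*(n-k)}. p_box k (n - k) i * q ^ i)"
proof -
  let ?L = "\<lambda>P. length (free_positions n k P)"
  have "(\<Sum>P\<in>pivot_vectors n k. if m < ?L P then q ^ ?L P else 0)
      = (\<Sum>i\<in>{..k*(n-k)}. \<Sum>P\<in>{P \<in> pivot_vectors n k. ?L P = i}. if m < ?L P then q ^ ?L P else 0)"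
    by (rule sum.group[symmetric]) (use finite_pivot_vectors length_free_positions_le in auto)
  also have "\<dots> = (\<Sum>i\<in>{..k*(n-k)}. if m < i then p_box k (n - k) i * q ^ i else 0)"
  proof (intro sum.cong refl)
    fix i
    have "card {P \<in> pivot_vectors n k. ?L P = i} = p_box k (n - k) i"
      unfolding p_box_eq_card by (rule bij_betw_same_card[OF bij_betw_row_length[OF assms]])
    then show "(\<Sum>P\<in>{P \<in> pivot_vectors n k. ?L P = i}. if m < ?L P then q ^ ?L P else 0)
        = (if m < i then p_box k (n - k) i * q ^ i else 0)"
      by simp
  qed
  also have "\<dots> = (\<Sum>i\<in>{m+1..k*(n-k)}. p_box k (n - k) i * q ^ i)"
    by (subst sum.inter_filter[symmetric]) (simp_all add: Suc_le_eq conj_commute atLeastAtMost_def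
        atLeast_def atMost_def Collect_conj_eq[symmetric])
  finally show ?thesis .
qed

lemma sum_pivot_vectors_fless:
  assumes "k \<le> n"
  shows "(\<Sum>P\<in>pivot_vectors n k. if length (free_positions n k P) = m \<and> fless (ferrers_of n k P) F then c else 0)
    = ind n k m F * c"
proof -
  have "(\<Sum>P\<in>pivot_vectors n k. if length (free_positions n k P) = m \<and> fless (ferrers_of n k P) F then c else 0)
      = card {P \<in> {P \<in> pivot_vectors n k. length (free_positions n k P) = m}. fless (ferrers_of n k P) F} * c"
    using finite_pivot_vectors by (simp add: sum.inter_filter[symmetric] conj_assoc)
  also have "card {P \<in> {P \<in> pivot_vectors n k. length (free_positions n k P) = m}. fless (ferrers_of n k P) F}
      = ind n k m F"
    unfolding ind_def by (rule card_filter_bij_betw[OF bij_betw_ferrers_of[OF assms]])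
  finally show ?thesis .
qed

lemma card_gless_eq_sum_pivot_vectors:
  fixes enc :: "'a::{field,finite} \<Rightarrow> nat"
  assumes bij: "bij_betw enc UNIV {..<card (UNIV :: 'a set)}" and X: "X \<in> Grass n k"
  defines "q \<equiv> card (UNIV :: 'a set)" and "PX \<equiv> piv n k X"
    and "L \<equiv> \<lambda>P. length (free_positions n k P)"
  shows "card {Y \<in> Grass n k. gless enc q n k Y X}
    = (\<Sum>P\<in>pivot_vectors n k. (if L PX < L P then q ^ L P else 0)
      + (if L P = L PX \<and> fless (ferrers_of n k P) (ferrers_of n k PX) then q ^ L PX else 0)
      + (if P = PX then entval enc q (entries n k X) else 0))"
proof -
  define e where "e = entval enc q (entries n k X)"
  have PX: "PX \<in> pivot_vectors n k"
    unfolding PX_def by (rule Grass_piv_entries(1)[OF X])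
  have "\<And>x. enc x < q"
    using bij unfolding bij_betw_def q_def by auto
  then have e: "e < q ^ L PX"
    using entval_less Grass_piv_entries(2)[OF X] unfolding e_def L_def PX_def by metis
  define R where "R P xs \<longleftrightarrow> L PX < fsize n k (ferrers_of n k P)
      \<or> fsize n k (ferrers_of n k P) = L PX \<and> fless (ferrers_of n k P) (ferrers_of n k PX)
      \<or> ferrers_of n k P = ferrers_of n k PX \<and> entval enc q xs < e" for P xs
  have "gless enc q n k Y X \<longleftrightarrow> R (piv n k Y) (entries n k Y)" for Y
    using fsize_ferrers_of[OF PX]
    by (simp add: gless_def Let_def R_def e_def L_def PX_def ferrers_eq_ferrers_of)
  then have "card {Y \<in> Grass n k. gless enc q n k Y X}
      = (\<Sum>P\<in>pivot_vectors n k. card {xs :: 'a list. length xs = L P \<and> R P xs})"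
    unfolding L_def by (simp add: card_Grass_by_pivots[of n k R, symmetric])
  also have "\<dots> = (\<Sum>P\<in>pivot_vectors n k. (if L PX < L P then q ^ L P else 0)
      + (if L P = L PX \<and> fless (ferrers_of n k P) (ferrers_of n k PX) then q ^ L PX else 0)
      + (if P = PX then e else 0))"
    using card_lists_gless_fiber[OF bij _ PX, of _ e] e
    by (intro sum.cong refl) (simp add: R_def fsize_ferrers_of q_def L_def)
  finally show ?thesis
    unfolding e_def .
qed

theorem theorem8:
  fixes enc :: "'a::{field,finite} \<Rightarrow> nat" and n k :: nat and X :: "(nat \<Rightarrow> 'a) set"
  assumes "bij_betw enc UNIV {..<card (UNIV :: 'a set)}"
    and "0 < k" and "k < n"
    and "X \<in> Grass n k"
  shows "card {Y \<in> Grass n k. gless enc (card (UNIV :: 'a set)) n k Y X} =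
     (let q = card (UNIV :: 'a set); F = ferrers n k X; m = fsize n k F in
       (\<Sum>i\<in>{m+1..k*(n-k)}. p_box k (n-k) i * q ^ i)
       + ind n k m F * q ^ m + entval enc q (entries n k X))"
proof -
  define PX where "PX = piv n k X"
  have PX: "PX \<in> pivot_vectors n k"
    unfolding PX_def by (rule Grass_piv_entries(1)[OF assms(4)])
  have F: "ferrers n k X = ferrers_of n k PX"
    unfolding PX_def by (rule ferrers_eq_ferrers_of)
  show ?thesis
    unfolding card_gless_eq_sum_pivot_vectors[OF assms(1,4)] Let_def F PX_def[symmetric]
    using assms(3) PX finite_pivot_vectors
    by (simp add: sum.distrib fsize_ferrers_of sum_pivot_vectors_longer sum_pivot_vectors_fless)
qed

end
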